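(* Let $(M,g)$ be a Riemannian manifold and $\mathfrak{X}$ a Killing vector field on $M$. Then at every point $|\mathfrak{X}|^2|\nabla\mathfrak{X}|^2\ge2|\nabla_{\mathfrak{X}}\mathfrak{X}|^2$.
   Context: $|\nabla\mathfrak{X}|^2=\sum_i|\nabla_{e_i}\mathfrak{X}|^2$ for an orthonormal basis $(e_i)$ of the tangent space; $\nabla$ is the Levi-Civita connection of $g$. *)

theory Defs
  imports "HOL-Analysis.Analysis"
begin

text \<open>Local (coordinate) model of a Riemannian manifold: an open set U of R^n
  with a metric tensor g(x) = (g_ij(x)); vectors are coordinate vectors.\<close>

definition pd :: "(real^'n \<Rightarrow> real) \<Rightarrow> real^'n \<Rightarrow> 'n \<Rightarrow> real" where
  "pd f x i = frechet_derivative f (at x) (axis i 1)"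

definition riemannian_metric :: "(real^'n) set \<Rightarrow> (real^'n \<Rightarrow> real^'n^'n) \<Rightarrow> bool" where
  "riemannian_metric U g \<longleftrightarrow> open U \<and>
     (\<forall>x\<in>U. transpose (g x) = g x \<and> (\<forall>v. v \<noteq> 0 \<longrightarrow> v \<bullet> (g x *v v) > 0)) \<and>
     (\<forall>i j. (\<lambda>x. g x $ i $ j) differentiable_on U)"

definition vector_field :: "(real^'n) set \<Rightarrow> (real^'n \<Rightarrow> real^'n) \<Rightarrow> bool" where
  "vector_field U X \<longleftrightarrow> (\<forall>j. (\<lambda>x. X x $ j) differentiable_on U)"

definition christoffel :: "(real^'n \<Rightarrow> real^'n^'n) \<Rightarrow> real^'n \<Rightarrow> 'n \<Rightarrow> 'n \<Rightarrow> 'n \<Rightarrow> real" where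
  "christoffel g x k i j = (1/2) * (\<Sum>l\<in>UNIV. matrix_inv (g x) $ k $ l *
      (pd (\<lambda>y. g y $ j $ l) x i + pd (\<lambda>y. g y $ i $ l) x j - pd (\<lambda>y. g y $ i $ j) x l))"

text \<open>Killing field: the Lie derivative of g along X vanishes,
  (L_X g)_ij = X^k d_k g_ij + g_kj d_i X^k + g_ik d_j X^k = 0.\<close>
definition killing :: "(real^'n) set \<Rightarrow> (real^'n \<Rightarrow> real^'n^'n) \<Rightarrow> (real^'n \<Rightarrow> real^'n) \<Rightarrow> bool" where
  "killing U g X \<longleftrightarrow> (\<forall>x\<in>U. \<forall>i j.
     (\<Sum>k\<in>UNIV. X x $ k * pd (\<lambda>y. g y $ i $ j) x k
        + g x $ k $ j * pd (\<lambda>y. X y $ k) x i + g x $ i $ k * pd (\<lambda>y. X y $ k) x j) = 0)"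

definition covd :: "(real^'n \<Rightarrow> real^'n^'n) \<Rightarrow> (real^'n \<Rightarrow> real^'n) \<Rightarrow> real^'n \<Rightarrow> real^'n \<Rightarrow> real^'n" where
  "covd g X x v = (\<chi> j. \<Sum>i\<in>UNIV. v $ i * (pd (\<lambda>y. X y $ j) x i
       + (\<Sum>k\<in>UNIV. christoffel g x j i k * X x $ k)))"

definition gnorm2 :: "(real^'n \<Rightarrow> real^'n^'n) \<Rightarrow> real^'n \<Rightarrow> real^'n \<Rightarrow> real" where
  "gnorm2 g x v = v \<bullet> (g x *v v)"

definition g_orthonormal :: "(real^'n \<Rightarrow> real^'n^'n) \<Rightarrow> real^'n \<Rightarrow> ('n \<Rightarrow> real^'n) \<Rightarrow> bool" where
  "g_orthonormal g x e \<longleftrightarrow> (\<forall>a b. e a \<bullet> (g x *v e b) = (if a = b then 1 else 0))"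

end

theory Submission
  imports Defs
begin

(*
  At x, nabla X is a matrix M with nabla_v X = M v. The Killing equation, together with the
  Christoffel symbols of the first kind, says that M is skew-adjoint for G = g(x):
  G M + M^T G = 0. In the G-orthonormal frame e, M becomes a skew-symmetric matrix B and
  |nabla X|^2 becomes the Frobenius norm |B|^2, so it suffices that 2 |B v|^2 <= |v|^2 |B|^2
  for skew B. This is Cauchy-Schwarz for the Frobenius product of B with
  C = (B v) v^T - v (B v)^T: skewness gives v orthogonal to B v, hence B . C = 2 |B v|^2
  and |C|^2 = 2 |B v|^2 |v|^2.
*)

lemma matrix_vector_mult_uminus: "(- A) *v x = - (A *v x)" for A :: "real^'n^'m"
  by (simp add: matrix_vector_mult_def vec_eq_iff sum_negf)

lemma matrix_add_rdistrib: "(A + B) ** C = A ** C + B ** C"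
  by (vector matrix_matrix_mult_def sum.distrib[symmetric] field_simps)

lemma inner_matrix_vector_mult_transpose: "(A *v x) \<bullet> y = x \<bullet> (transpose A *v y)"
  for A :: "real^'n^'m"
  by (metis dot_lmul_matrix vector_transpose_matrix)

lemma skew_quadratic_form_eq_0:
  fixes B :: "real^'n^'n"
  assumes "transpose B = - B"
  shows "v \<bullet> (B *v v) = 0"
proof -
  have "v \<bullet> (B *v v) = (transpose B *v v) \<bullet> v"
    by (simp add: dot_lmul_matrix)
  also have "\<dots> = - (v \<bullet> (B *v v))"
    by (simp add: assms matrix_vector_mult_uminus inner_commute)
  finally show ?thesis by simp
qed

definition outer_prod :: "real^'m \<Rightarrow> real^'n \<Rightarrow> real^'n^'m" where
  "outer_prod y v = (\<chi> i j. y $ i * v $ j)"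

lemma inner_outer_prod: "A \<bullet> outer_prod y v = y \<bullet> (A *v v)"
  by (simp add: outer_prod_def inner_vec_def matrix_vector_mult_def sum_distrib_left ac_simps)

lemma outer_prod_inner_outer_prod:
  "outer_prod a b \<bullet> outer_prod c d = (a \<bullet> c) * (b \<bullet> d)"
  unfolding outer_prod_def inner_vec_def sum_product by (simp add: mult_ac)

lemma skew_inner_outer_prod_antisym:
  fixes B :: "real^'n^'n"
  assumes "transpose B = - B"
  shows "B \<bullet> (outer_prod y v - outer_prod v y) = 2 * (y \<bullet> (B *v v))"
proof -
  have "v \<bullet> (B *v y) = (transpose B *v v) \<bullet> y"
    by (simp add: dot_lmul_matrix)
  also have "\<dots> = - (y \<bullet> (B *v v))"
    by (simp add: assms matrix_vector_mult_uminus inner_commute)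
  finally show ?thesis by (simp add: inner_diff_right inner_outer_prod)
qed

lemma skew_matrix_norm_ineq:
  fixes B :: "real^'n^'n"
  assumes skew: "transpose B = - B"
  shows "2 * ((B *v v) \<bullet> (B *v v)) \<le> (v \<bullet> v) * (B \<bullet> B)"
proof -
  define y where "y = B *v v"
  define C where "C = outer_prod y v - outer_prod v y"
  have "v \<bullet> y = 0"
    using skew_quadratic_form_eq_0[OF skew] by (simp add: y_def)
  then have CC: "C \<bullet> C = 2 * (y \<bullet> y) * (v \<bullet> v)"
    by (simp add: C_def inner_diff outer_prod_inner_outer_prod inner_commute[of y v])
  have BC: "B \<bullet> C = 2 * (y \<bullet> y)"
    by (simp add: C_def y_def skew_inner_outer_prod_antisym[OF skew])
  have "(2 * (y \<bullet> y))\<^sup>2 \<le> (B \<bullet> B) * (2 * (y \<bullet> y) * (v \<bullet> v))"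
    using Cauchy_Schwarz_ineq[of B C] by (simp only: BC CC)
  then have "(y \<bullet> y) * (2 * (y \<bullet> y) - (v \<bullet> v) * (B \<bullet> B)) \<le> 0"
    by (simp add: power2_eq_square algebra_simps)
  moreover have "0 \<le> (v \<bullet> v) * (B \<bullet> B)" "0 \<le> y \<bullet> y" by simp_all
  ultimately show ?thesis
    unfolding y_def[symmetric] by (cases "y \<bullet> y = 0") (auto simp: mult_le_0_iff)
qed

definition frame_matrix :: "('n::finite \<Rightarrow> real^'m) \<Rightarrow> real^'n^'m" where
  "frame_matrix e = (\<chi> i a. e a $ i)"

lemma frame_matrix_axis: "frame_matrix e *v axis a 1 = e a"
  by (simp add: frame_matrix_def matrix_vector_mult_basis column_def)

lemma inner_matrix_axis: "axis a 1 \<bullet> (A *v axis b 1) = A $ a $ b" for A :: "real^'n^'m"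
  by (simp add: matrix_vector_mult_basis column_def inner_axis')

lemma orthonormal_frame_gram:
  fixes G :: "real^'m^'m" and e :: "'n::finite \<Rightarrow> real^'m"
  assumes "\<And>a b. e a \<bullet> (G *v e b) = (if a = b then 1 else 0)"
  shows "transpose (frame_matrix e) ** G ** frame_matrix e = mat 1"
proof -
  have "(transpose (frame_matrix e) ** G ** frame_matrix e) $ a $ b = mat 1 $ a $ b" for a b
  proof -
    have "(transpose (frame_matrix e) ** G ** frame_matrix e) $ a $ b
        = (frame_matrix e *v axis a 1) \<bullet> (G *v (frame_matrix e *v axis b 1))"
      by (simp add: inner_matrix_axis[symmetric] inner_matrix_vector_mult_transpose
          matrix_vector_mul_assoc matrix_mul_assoc)
    then show ?thesis by (simp add: frame_matrix_axis assms mat_def)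
  qed
  then show ?thesis by (simp add: vec_eq_iff)
qed

lemma inner_self_matrix_columns:
  "A \<bullet> A = (\<Sum>a\<in>UNIV. (A *v axis a 1) \<bullet> (A *v axis a 1))" for A :: "real^'n^'m"
  by (simp add: matrix_vector_mult_basis column_def inner_vec_def) (rule sum.swap)

lemma skew_adjoint_norm_ineq:
  fixes G M :: "real^'n^'n" and e :: "'n \<Rightarrow> real^'n"
  assumes sym: "transpose G = G"
    and orthonormal: "\<And>a b. e a \<bullet> (G *v e b) = (if a = b then 1 else 0)"
    and skew_adjoint: "G ** M + transpose M ** G = 0"
  shows "2 * ((M *v v) \<bullet> (G *v (M *v v)))
           \<le> (v \<bullet> (G *v v)) * (\<Sum>a\<in>UNIV. (M *v e a) \<bullet> (G *v (M *v e a)))"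
proof -
  define E where "E = frame_matrix e"
  have gram: "transpose E ** G ** E = mat 1"
    unfolding E_def by (rule orthonormal_frame_gram[OF orthonormal])
  then have E_right_inverse: "E ** (transpose E ** G) = mat 1"
    using matrix_left_right_inverse by (metis matrix_mul_assoc)
  have frame_norm: "(E *v \<xi>) \<bullet> (G *v (E *v \<xi>)) = \<xi> \<bullet> \<xi>" for \<xi>
    by (simp add: inner_matrix_vector_mult_transpose matrix_vector_mul_assoc
        matrix_mul_assoc gram)
  define B where "B = transpose E ** G ** M ** E"
  have "transpose B = transpose E ** (transpose M ** G) ** E"
    by (simp add: B_def matrix_transpose_mul sym matrix_mul_assoc)
  also have "\<dots> = - B"
  proof -
    have "B + transpose E ** (transpose M ** G) ** E
        = transpose E ** ((G ** M + transpose M ** G) ** E)"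
      by (simp add: B_def matrix_add_ldistrib matrix_add_rdistrib matrix_mul_assoc)
    then show ?thesis
      by (simp add: skew_adjoint eq_neg_iff_add_eq_0 add.commute)
  qed
  finally have skew: "transpose B = - B" .
  have "E ** B = (E ** (transpose E ** G)) ** M ** E"
    by (simp add: B_def matrix_mul_assoc)
  then have ME: "M *v (E *v \<xi>) = E *v (B *v \<xi>)" for \<xi>
    by (simp add: E_right_inverse matrix_vector_mul_assoc)
  define \<xi> where "\<xi> = (transpose E ** G) *v v"
  have v: "v = E *v \<xi>"
    by (simp add: \<xi>_def matrix_vector_mul_assoc E_right_inverse)
  have "(\<Sum>a\<in>UNIV. (M *v e a) \<bullet> (G *v (M *v e a))) = B \<bullet> B"
    by (simp add: inner_self_matrix_columns[of B] frame_matrix_axis[of e, symmetric]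
        E_def[symmetric] ME frame_norm)
  moreover have "v \<bullet> (G *v v) = \<xi> \<bullet> \<xi>"
    by (simp add: v frame_norm)
  moreover have "(M *v v) \<bullet> (G *v (M *v v)) = (B *v \<xi>) \<bullet> (B *v \<xi>)"
    by (simp add: v ME frame_norm)
  ultimately show ?thesis
    using skew_matrix_norm_ineq[OF skew] by simp
qed

lemma matrix_inv_right: "invertible A \<Longrightarrow> A ** matrix_inv A = mat 1"
  unfolding invertible_def matrix_inv_def by (rule someI2_ex) blast+

lemma positive_definite_invertible:
  fixes A :: "real^'n^'n"
  assumes "\<And>v. v \<noteq> 0 \<Longrightarrow> 0 < v \<bullet> (A *v v)"
  shows "invertible A"
  unfolding invertible_left_inverse matrix_left_invertible_ker
  using assms by (metis inner_zero_right less_irrefl)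

lemma symmetric_matrix_entry: "transpose A = A \<Longrightarrow> A $ i $ j = A $ j $ i"
  by (metis transpose_def vec_lambda_beta)

lemma riemannian_metric_symmetric:
  "riemannian_metric U g \<Longrightarrow> x \<in> U \<Longrightarrow> transpose (g x) = g x"
  by (simp add: riemannian_metric_def)

lemma riemannian_metric_inverse:
  "riemannian_metric U g \<Longrightarrow> x \<in> U \<Longrightarrow> g x ** matrix_inv (g x) = mat 1"
  unfolding riemannian_metric_def by (blast intro: matrix_inv_right positive_definite_invertible)

lemma riemannian_metric_pd_symmetric:
  assumes metric: "riemannian_metric U g" and "x \<in> U"
  shows "pd (\<lambda>y. g y $ i $ j) x k = pd (\<lambda>y. g y $ j $ i) x k"
proof -
  have "open U" and "(\<lambda>y. g y $ i $ j) differentiable_on U"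
    using metric by (simp_all add: riemannian_metric_def)
  then have "(\<lambda>y. g y $ i $ j) differentiable at x"
    using \<open>x \<in> U\<close> differentiable_on_eq_differentiable_at by blast
  then have "frechet_derivative (\<lambda>y. g y $ i $ j) (at x)
      = frechet_derivative (\<lambda>y. g y $ j $ i) (at x)"
    by (rule frechet_derivative_transform_within_open[OF _ \<open>open U\<close> \<open>x \<in> U\<close>])
      (use metric in \<open>simp add: riemannian_metric_symmetric symmetric_matrix_entry\<close>)
  then show ?thesis by (simp add: pd_def)
qed

lemma christoffel_lower_index:
  assumes "g x ** matrix_inv (g x) = mat 1"
  shows "(\<Sum>k\<in>UNIV. g x $ m $ k * christoffel g x k a b) =
    (1/2) * (pd (\<lambda>y. g y $ b $ m) x a + pd (\<lambda>y. g y $ a $ m) x b - pd (\<lambda>y. g y $ a $ b) x m)"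
proof -
  define T where "T l = pd (\<lambda>y. g y $ b $ l) x a + pd (\<lambda>y. g y $ a $ l) x b
      - pd (\<lambda>y. g y $ a $ b) x l" for l
  have "(\<Sum>k\<in>UNIV. g x $ m $ k * christoffel g x k a b)
      = (\<Sum>k\<in>UNIV. \<Sum>l\<in>UNIV. (1/2) * (g x $ m $ k * matrix_inv (g x) $ k $ l * T l))"
    by (simp add: christoffel_def T_def sum_distrib_left mult.assoc)
  also have "\<dots> = (\<Sum>l\<in>UNIV. (1/2) * ((g x ** matrix_inv (g x)) $ m $ l * T l))"
    by (subst sum.swap) (simp add: matrix_matrix_mult_def sum_distrib_left sum_distrib_right)
  also have "\<dots> = (1/2) * T m"
    by (simp add: assms mat_def if_distrib if_distribR sum.delta cong del: if_weak_cong)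
  finally show ?thesis by (simp add: T_def)
qed

definition covd_matrix :: "(real^'n \<Rightarrow> real^'n^'n) \<Rightarrow> (real^'n \<Rightarrow> real^'n) \<Rightarrow> real^'n \<Rightarrow> real^'n^'n"
  where "covd_matrix g X x =
    (\<chi> j i. pd (\<lambda>y. X y $ j) x i + (\<Sum>k\<in>UNIV. christoffel g x j i k * X x $ k))"

lemma covd_eq_covd_matrix: "covd g X x v = covd_matrix g X x *v v"
  by (simp add: covd_def covd_matrix_def matrix_vector_mult_def vec_eq_iff mult.commute)

lemma metric_covd_matrix_entry:
  assumes "g x ** matrix_inv (g x) = mat 1"
  shows "(g x ** covd_matrix g X x) $ i $ j =
    (\<Sum>k\<in>UNIV. g x $ i $ k * pd (\<lambda>y. X y $ k) x j)
    + (\<Sum>l\<in>UNIV. X x $ l * ((1/2) * (pd (\<lambda>y. g y $ l $ i) x j + pd (\<lambda>y. g y $ j $ i) x l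
                                      - pd (\<lambda>y. g y $ j $ l) x i)))"
proof -
  have "(\<Sum>k\<in>UNIV. g x $ i $ k * (\<Sum>l\<in>UNIV. christoffel g x k j l * X x $ l))
      = (\<Sum>l\<in>UNIV. X x $ l * (\<Sum>k\<in>UNIV. g x $ i $ k * christoffel g x k j l))"
    unfolding sum_distrib_left by (subst sum.swap) (simp add: ac_simps)
  then have "(g x ** covd_matrix g X x) $ i $ j =
    (\<Sum>k\<in>UNIV. g x $ i $ k * pd (\<lambda>y. X y $ k) x j)
    + (\<Sum>l\<in>UNIV. X x $ l * (\<Sum>k\<in>UNIV. g x $ i $ k * christoffel g x k j l))"
    by (simp add: covd_matrix_def matrix_matrix_mult_def distrib_left sum.distrib)
  then show ?thesis by (simp add: christoffel_lower_index[of g x, OF assms])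
qed

lemma killing_covd_matrix_skew_adjoint:
  assumes metric: "riemannian_metric U g" and "killing U g X" and "x \<in> U"
  shows "g x ** covd_matrix g X x + transpose (covd_matrix g X x) ** g x = 0"
proof -
  have sym: "transpose (g x) = g x"
    using metric \<open>x \<in> U\<close> by (rule riemannian_metric_symmetric)
  note pd_sym = riemannian_metric_pd_symmetric[OF metric \<open>x \<in> U\<close>]
  note entry = metric_covd_matrix_entry[of g x, OF riemannian_metric_inverse[OF metric \<open>x \<in> U\<close>]]
  have "(g x ** covd_matrix g X x) $ i $ j + (g x ** covd_matrix g X x) $ j $ i = 0" for i j
  proof -
    (* the Christoffel terms of (i,j) and (j,i) add up to X^l d_l g_ij,
       by symmetry of g and of its derivatives *)
    have "(g x ** covd_matrix g X x) $ i $ j + (g x ** covd_matrix g X x) $ j $ i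
      = (\<Sum>k\<in>UNIV. X x $ k * pd (\<lambda>y. g y $ i $ j) x k
           + g x $ k $ j * pd (\<lambda>y. X y $ k) x i + g x $ i $ k * pd (\<lambda>y. X y $ k) x j)"
      by (simp add: entry pd_sym[of _ i] pd_sym[of j] symmetric_matrix_entry[OF sym, of j]
          sum.distrib[symmetric] algebra_simps)
    also have "\<dots> = 0"
      using \<open>killing U g X\<close> \<open>x \<in> U\<close> by (simp add: killing_def)
    finally show ?thesis .
  qed
  moreover have "transpose (covd_matrix g X x) ** g x = transpose (g x ** covd_matrix g X x)"
    by (simp add: matrix_transpose_mul sym)
  ultimately show ?thesis
    by (simp add: vec_eq_iff transpose_def)
qed

theorem lemma4p10:
  fixes U :: "(real^'n) set" and g :: "real^'n \<Rightarrow> real^'n^'n"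
    and X :: "real^'n \<Rightarrow> real^'n" and x :: "real^'n" and e :: "'n \<Rightarrow> real^'n"
  assumes "riemannian_metric U g" and "vector_field U X" and "killing U g X"
    and "x \<in> U" and "g_orthonormal g x e"
  shows "gnorm2 g x (X x) * (\<Sum>a\<in>UNIV. gnorm2 g x (covd g X x (e a)))
           \<ge> 2 * gnorm2 g x (covd g X x (X x))"
proof -
  have "transpose (g x) = g x"
    using assms(1,4) by (rule riemannian_metric_symmetric)
  moreover have "\<And>a b. e a \<bullet> (g x *v e b) = (if a = b then 1 else 0)"
    using assms(5) by (simp add: g_orthonormal_def)
  moreover have "g x ** covd_matrix g X x + transpose (covd_matrix g X x) ** g x = 0"
    using assms(1,3,4) by (rule killing_covd_matrix_skew_adjoint)
  ultimately show ?thesis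
    unfolding gnorm2_def covd_eq_covd_matrix by (rule skew_adjoint_norm_ineq)
qed

end
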